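(* Let $X,Y$ be real Banach spaces and let $H$ be a closed subspace of $L(X,Y)$ with $X^*\otimes Y\subseteq H$ such that $H$ has octahedral norm. Assume that the norm of $X^*$ is non-rough. Then $Y$ has octahedral norm.
   Context: The norm of a Banach space $Z$ is octahedral if for every finite-dimensional subspace $E$ and $\varepsilon>0$ there is $y\in S_Z$ with $\|x+\lambda y\|\ge(1-\varepsilon)(\|x\|+|\lambda|)$ for all $x\in E$, scalars $\lambda$. For $u\in S_Z$, the roughness of $Z$ at $u$ is $\eta(Z,u)=\limsup_{\|h\|\to0}\frac{\|u+h\|+\|u-h\|-2}{\|h\|}$. $Z$ is $\varepsilon$-rough if $\eta(Z,u)\ge\varepsilon$ for every $u\in S_Z$; $Z$ (its norm) is rough if it is $\varepsilon$-rough for some $\varepsilon>0$, and non-rough otherwise. $X^*\otimes Y$ is the space of finite-rank operators spanned by $x\mapsto x^*(x)y$. *)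

theory Defs
  imports "HOL-Analysis.Analysis" "HOL-Library.Liminf_Limsup"
begin

text \<open>Octahedral norm of a (closed) subspace S of a real normed space, with the
restricted norm. Finite-dimensional subspaces of S are spans of finite subsets of S.\<close>
definition octahedral_on :: "'a::real_normed_vector set \<Rightarrow> bool" where
  "octahedral_on S \<longleftrightarrow>
     (\<forall>E \<epsilon>. (\<exists>B. finite B \<and> B \<subseteq> S \<and> E = span B) \<and> \<epsilon> > 0 \<longrightarrow>
        (\<exists>y\<in>S. norm y = 1 \<and>
           (\<forall>x\<in>E. \<forall>c::real. norm (x + c *\<^sub>R y) \<ge> (1 - \<epsilon>) * (norm x + \<bar>c\<bar>))))"

abbreviation octahedral :: "'a::real_normed_vector itself \<Rightarrow> bool" where
  "octahedral _ \<equiv> octahedral_on (UNIV :: 'a set)"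

definition roughness :: "'a::real_normed_vector \<Rightarrow> ereal" where
  "roughness u = Limsup (at 0) (\<lambda>h. ereal ((norm (u + h) + norm (u - h) - 2) / norm h))"

definition eps_rough :: "'a::real_normed_vector itself \<Rightarrow> real \<Rightarrow> bool" where
  "eps_rough _ \<epsilon> \<longleftrightarrow> (\<forall>u::'a. norm u = 1 \<longrightarrow> roughness u \<ge> ereal \<epsilon>)"

definition rough :: "'a::real_normed_vector itself \<Rightarrow> bool" where
  "rough t \<longleftrightarrow> (\<exists>\<epsilon>>0. eps_rough t \<epsilon>)"

text \<open>Rank-one operator x \<mapsto> x*(x) y, and X* \<otimes> Y as their linear span.\<close>
definition rank_one :: "('a::real_normed_vector \<Rightarrow>\<^sub>L real) \<Rightarrow> 'b::real_normed_vector \<Rightarrow> ('a \<Rightarrow>\<^sub>L 'b)" where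
  "rank_one f y = blinfun_scaleR_left y o\<^sub>L f"

lemma rank_one_apply: "blinfun_apply (rank_one f y) x = blinfun_apply f x *\<^sub>R y"
  by (simp add: rank_one_def)

definition tensor_dual :: "('a::real_normed_vector \<Rightarrow>\<^sub>L 'b::real_normed_vector) set" where
  "tensor_dual = span {rank_one f y | f y. True}"

end

theory Submission
  imports Defs
begin

(* Let E \<subseteq> Y be finite-dimensional, w.l.o.g. containing a unit vector w, and \<epsilon> > 0.  Non-roughness
   gives u \<in> S_{X*} at which the roughness of X* is small; testing the roughness quotient in the
   direction of g \<circ> T shows that every operator T of norm at most one has small oscillation on a
   thin slice {x \<in> B_X. u x \<ge> 1 - \<delta>}.  Octahedrality of H at the finite-dimensional subspace
   u \<otimes> E \<subseteq> X* \<otimes> Y gives T \<in> S_H almost l1-orthogonal to u \<otimes> E.  For x0 in the slice, y0 = T x0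
   is almost l1-orthogonal to E: a point x norming u e + c T either lies in the slice (so T x is
   close to y0) or forces e to be small.  Normalising y0 gives the required unit vector. *)

section \<open>Norming functionals\<close>

text \<open>Graphs of linear functionals on a subspace, dominated by the norm and norming at v.\<close>
definition dominated_graphs :: "'a::real_normed_vector \<Rightarrow> ('a \<times> real) set set" where
  "dominated_graphs v = {G. (v, norm v) \<in> G
     \<and> (\<forall>x a y b. (x,a) \<in> G \<longrightarrow> (y,b) \<in> G \<longrightarrow> (x + y, a + b) \<in> G)
     \<and> (\<forall>x a c. (x,a) \<in> G \<longrightarrow> (c *\<^sub>R x, c * a) \<in> G)
     \<and> (\<forall>x a. (x,a) \<in> G \<longrightarrow> a \<le> norm x)}"

lemma line_dominated_graph: "{(c *\<^sub>R v, c * norm v) |c. True} \<in> dominated_graphs v"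
  (is "?G \<in> _")
  unfolding dominated_graphs_def
proof (rule CollectI, intro conjI allI impI)
  show "(v, norm v) \<in> ?G" by (auto intro!: exI[of _ 1])
next
  fix x a y b assume "(x,a) \<in> ?G" "(y,b) \<in> ?G"
  then obtain c d where "x = c *\<^sub>R v" "a = c * norm v" "y = d *\<^sub>R v" "b = d * norm v" by auto
  then show "(x + y, a + b) \<in> ?G" by (auto intro!: exI[of _ "c + d"] simp: scaleR_add_left distrib_right)
next
  fix x a c assume "(x,a) \<in> ?G"
  then show "(c *\<^sub>R x, c * a) \<in> ?G" by auto
next
  fix x a assume "(x,a) \<in> ?G"
  then show "a \<le> norm x" by (auto simp: mult_right_mono)
qed

text \<open>Every chain of dominated graphs has an upper bound (the line through v, or the union).\<close>
lemma dominated_graphs_chain_bound: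
  fixes v :: "'a::real_normed_vector"
  assumes C: "C \<in> chains (dominated_graphs v)"
  shows "\<exists>U\<in>dominated_graphs v. \<forall>X\<in>C. X \<subseteq> U"
proof (cases "C = {}")
  case True
  then show ?thesis using line_dominated_graph by blast
next
  case False
  have sub: "C \<subseteq> dominated_graphs v" and ch: "\<And>A B. A \<in> C \<Longrightarrow> B \<in> C \<Longrightarrow> A \<subseteq> B \<or> B \<subseteq> A"
    using C by (auto simp: chains_def chain_subset_def)
  have "\<Union>C \<in> dominated_graphs v"
    unfolding dominated_graphs_def
  proof (rule CollectI, intro conjI allI impI)
    show "(v, norm v) \<in> \<Union>C" using False sub by (auto simp: dominated_graphs_def)
  next
    fix x a y b assume "(x,a) \<in> \<Union>C" "(y,b) \<in> \<Union>C"
    then obtain A B where AB: "A \<in> C" "B \<in> C" "(x,a) \<in> A" "(y,b) \<in> B" by auto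
    with ch[OF AB(1,2)] obtain G where G: "G \<in> C" "(x,a) \<in> G" "(y,b) \<in> G" by blast
    then have "G \<in> dominated_graphs v" using sub by blast
    then have "(x + y, a + b) \<in> G" using G unfolding dominated_graphs_def by blast
    then show "(x + y, a + b) \<in> \<Union>C" using G by blast
  next
    fix x a c assume "(x,a) \<in> \<Union>C"
    then obtain G where G: "G \<in> C" "(x,a) \<in> G" by blast
    then have "G \<in> dominated_graphs v" using sub by blast
    then have "(c *\<^sub>R x, c * a) \<in> G" using G unfolding dominated_graphs_def by blast
    then show "(c *\<^sub>R x, c * a) \<in> \<Union>C" using G by blast
  next
    fix x a assume "(x,a) \<in> \<Union>C"
    then show "a \<le> norm x" using sub by (auto simp: dominated_graphs_def)
  qed
  then show ?thesis by blast
qed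

text \<open>The one-step extension of Hahn-Banach: a value c for the new vector z that keeps the
  extended functional dominated exists, since sup (a - |s - z|) \<le> inf (|s + z| - a) over G.\<close>
lemma dominated_graph_extension_value:
  fixes v :: "'a::real_normed_vector"
  assumes G: "G \<in> dominated_graphs v"
  obtains c where "\<And>s a. (s,a) \<in> G \<Longrightarrow> a - norm (s - z) \<le> c"
    and "\<And>s a. (s,a) \<in> G \<Longrightarrow> c \<le> norm (s + z) - a"
proof -
  have "(0 *\<^sub>R v, 0 * norm v) \<in> G" using G unfolding dominated_graphs_def by blast
  then have zero: "(0,0) \<in> G" by simp
  have key: "a1 - norm (s1 - z) \<le> norm (s2 + z) - a2" if "(s1,a1) \<in> G" "(s2,a2) \<in> G" for s1 a1 s2 a2
  proof -
    have "(s1 + s2, a1 + a2) \<in> G" using that G unfolding dominated_graphs_def by blast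
    then have "a1 + a2 \<le> norm (s1 + s2)" using G unfolding dominated_graphs_def by blast
    also have "\<dots> \<le> norm (s1 - z) + norm (s2 + z)"
      using norm_triangle_ineq[of "s1 - z" "s2 + z"] by simp
    finally show ?thesis by simp
  qed
  define S where "S = {a - norm (s - z) |s a. (s,a) \<in> G}"
  have nonempty: "S \<noteq> {}" using zero by (auto simp: S_def)
  have bounded: "bdd_above S" unfolding S_def bdd_above_def using key[OF _ zero] by fastforce
  show ?thesis
  proof (rule that[of "Sup S"])
    fix s a assume "(s,a) \<in> G"
    then show "a - norm (s - z) \<le> Sup S" by (intro cSup_upper[OF _ bounded]) (auto simp: S_def)
  next
    fix s a assume "(s,a) \<in> G"
    then show "Sup S \<le> norm (s + z) - a" by (intro cSup_least[OF nonempty]) (auto simp: S_def intro: key)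
  qed
qed

text \<open>A value c between these bounds keeps the extension to span (G \<union> {z}) dominated:
  after scaling by 1/|t|, the bound for s + t z is one of the two inequalities on c.\<close>
lemma dominated_extension_bound:
  fixes v :: "'a::real_normed_vector"
  assumes G: "G \<in> dominated_graphs v"
    and c_ge: "\<And>s a. (s,a) \<in> G \<Longrightarrow> a - norm (s - z) \<le> c"
    and c_le: "\<And>s a. (s,a) \<in> G \<Longrightarrow> c \<le> norm (s + z) - a"
    and sa: "(s,a) \<in> G"
  shows "a + t * c \<le> norm (s + t *\<^sub>R z)"
proof -
  have scl: "\<And>x a c. (x,a) \<in> G \<Longrightarrow> (c *\<^sub>R x, c * a) \<in> G"
    and dom: "\<And>x a. (x,a) \<in> G \<Longrightarrow> a \<le> norm x"
    using G by (auto simp: dominated_graphs_def)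
  show ?thesis
  proof (cases t "0::real" rule: linorder_cases)
    case less
    have "(-1/t) *\<^sub>R s - z = (-1/t) *\<^sub>R (s + t *\<^sub>R z)" using less by (simp add: algebra_simps)
    then have "(-1/t) * a - (-1/t) * norm (s + t *\<^sub>R z) \<le> c"
      using c_ge[OF scl[OF sa, of "-1/t"]] less by simp
    then have "(-t) * ((-1/t) * a - (-1/t) * norm (s + t *\<^sub>R z)) \<le> (-t) * c"
      using less by (intro mult_left_mono) auto
    then have "t * norm (s + t *\<^sub>R z) \<le> t * (a + c * t)" using less by (simp add: field_simps)
    then show ?thesis using less by (simp add: mult_le_cancel_left_neg mult.commute)
  next
    case equal then show ?thesis using dom[OF sa] by simp
  next
    case greater
    have "(1/t) *\<^sub>R s + z = (1/t) *\<^sub>R (s + t *\<^sub>R z)" using greater by (simp add: algebra_simps)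
    then have "c \<le> (1/t) * norm (s + t *\<^sub>R z) - (1/t) * a"
      using c_le[OF scl[OF sa, of "1/t"]] greater by simp
    then have "t * c \<le> t * ((1/t) * norm (s + t *\<^sub>R z) - (1/t) * a)"
      using greater by (intro mult_left_mono) auto
    then have "t * (a + c * t) \<le> t * norm (s + t *\<^sub>R z)" using greater by (simp add: field_simps)
    then show ?thesis using greater by (simp add: mult.commute)
  qed
qed

lemma dominated_graph_extend:
  fixes v :: "'a::real_normed_vector"
  assumes G: "G \<in> dominated_graphs v" and z: "\<forall>a. (z,a) \<notin> G"
  shows "\<exists>G'\<in>dominated_graphs v. G \<subseteq> G' \<and> G' \<noteq> G"
proof -
  have add: "\<And>x a y b. (x,a) \<in> G \<Longrightarrow> (y,b) \<in> G \<Longrightarrow> (x + y, a + b) \<in> G"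
    and scl: "\<And>x a c. (x,a) \<in> G \<Longrightarrow> (c *\<^sub>R x, c * a) \<in> G"
    and vG: "(v, norm v) \<in> G"
    using G by (auto simp: dominated_graphs_def)
  obtain c where c_ge: "\<And>s a. (s,a) \<in> G \<Longrightarrow> a - norm (s - z) \<le> c"
    and c_le: "\<And>s a. (s,a) \<in> G \<Longrightarrow> c \<le> norm (s + z) - a"
    using dominated_graph_extension_value[OF G] by blast
  define G' where "G' = {(s + t *\<^sub>R z, a + t * c) |s a t. (s,a) \<in> G}"
  have sub: "G \<subseteq> G'"
  proof (rule subrelI)
    fix s a assume "(s,a) \<in> G"
    then show "(s,a) \<in> G'" unfolding G'_def by (intro CollectI exI[of _ s] exI[of _ a] exI[of _ 0]) simp
  qed
  have bound: "a + t * c \<le> norm (s + t *\<^sub>R z)" if "(s,a) \<in> G" for s a t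
    using dominated_extension_bound[OF G c_ge c_le that] .
  have "G' \<in> dominated_graphs v"
    unfolding dominated_graphs_def
  proof (rule CollectI, intro conjI allI impI)
    show "(v, norm v) \<in> G'" using sub vG by blast
  next
    fix x a y b assume "(x,a) \<in> G'" "(y,b) \<in> G'"
    then obtain s1 a1 t1 s2 a2 t2 where "x = s1 + t1 *\<^sub>R z" "a = a1 + t1 * c" "(s1,a1) \<in> G"
      "y = s2 + t2 *\<^sub>R z" "b = a2 + t2 * c" "(s2,a2) \<in> G" unfolding G'_def by blast
    then show "(x + y, a + b) \<in> G'" unfolding G'_def
      by (intro CollectI exI[of _ "s1 + s2"] exI[of _ "a1 + a2"] exI[of _ "t1 + t2"])
        (auto simp: add algebra_simps)
  next
    fix x a d assume "(x,a) \<in> G'"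
    then obtain s a1 t where "x = s + t *\<^sub>R z" "a = a1 + t * c" "(s,a1) \<in> G"
      unfolding G'_def by blast
    moreover have "(d *\<^sub>R s, d * a1) \<in> G" using scl \<open>(s,a1) \<in> G\<close> by blast
    ultimately show "(d *\<^sub>R x, d * a) \<in> G'" unfolding G'_def
      by (intro CollectI exI[of _ "d *\<^sub>R s"] exI[of _ "d * a1"] exI[of _ "d * t"]) (simp add: algebra_simps)
  next
    fix x a assume "(x,a) \<in> G'"
    then show "a \<le> norm x" unfolding G'_def using bound by blast
  qed
  moreover have "(z, c) \<in> G'"
    unfolding G'_def using scl[OF vG, of 0] by (intro CollectI exI[of _ 0] exI[of _ 0] exI[of _ 1]) simp
  ultimately show ?thesis using z sub by blast
qed

lemma norming_functional:
  fixes v :: "'a::real_normed_vector"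
  obtains g :: "'a \<Rightarrow>\<^sub>L real" where "norm g \<le> 1" and "blinfun_apply g v = norm v"
proof -
  obtain G where G: "G \<in> dominated_graphs v" and max: "\<forall>X\<in>dominated_graphs v. G \<subseteq> X \<longrightarrow> X = G"
    using Zorn_Lemma2[OF ballI[OF dominated_graphs_chain_bound]] by blast
  have add: "\<And>x a y b. (x,a) \<in> G \<Longrightarrow> (y,b) \<in> G \<Longrightarrow> (x + y, a + b) \<in> G"
    and scl: "\<And>x a c. (x,a) \<in> G \<Longrightarrow> (c *\<^sub>R x, c * a) \<in> G"
    and dom: "\<And>x a. (x,a) \<in> G \<Longrightarrow> a \<le> norm x"
    and vG: "(v, norm v) \<in> G"
    using G by (auto simp: dominated_graphs_def)
  have total: "\<exists>a. (z,a) \<in> G" for z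
    using dominated_graph_extend[OF G] max by blast
  have unique: "a = b" if "(x,a) \<in> G" "(x,b) \<in> G" for x a b
  proof -
    have "(0, a - b) \<in> G" "(0, b - a) \<in> G"
      using add[OF that(1) scl[OF that(2), of "-1"]] add[OF that(2) scl[OF that(1), of "-1"]]
      by simp_all
    then show ?thesis using dom[of 0 "a - b"] dom[of 0 "b - a"] by simp
  qed
  define f where "f z = (THE a. (z,a) \<in> G)" for z
  have fG: "(z, f z) \<in> G" for z
    unfolding f_def using total[of z] unique by (metis theI)
  have fadd: "f (x + y) = f x + f y" for x y
    using unique[OF fG add[OF fG fG]] by simp
  have fscl: "f (c *\<^sub>R x) = c * f x" for c x
    using unique[OF fG scl[OF fG]] by simp
  have fabs: "\<bar>f x\<bar> \<le> norm x" for x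
    using dom[OF fG, of x] dom[OF fG, of "-1 *\<^sub>R x"] fscl[of "-1" x] by simp
  have "bounded_linear f"
    by (rule bounded_linear_intro[of _ 1]) (auto simp: fadd fscl fabs)
  moreover have "f v = norm v" using unique[OF fG vG] .
  ultimately show ?thesis
    using fabs by (intro that[of "Blinfun f"]) (auto simp: bounded_linear_Blinfun_apply intro!: norm_blinfun_bound)
qed

lemma blinfun_apply_le_norm:
  fixes \<psi> :: "'a::real_normed_vector \<Rightarrow>\<^sub>L real"
  assumes "norm x \<le> 1"
  shows "blinfun_apply \<psi> x \<le> norm \<psi>"
  using norm_blinfun[of \<psi> x] assms abs_le_D1[of "blinfun_apply \<psi> x"] mult_left_le[of "norm x" "norm \<psi>"]
  by simp

text \<open>The norm of an operator is approached on the unit ball; since the unit ball is symmetric,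
  the approximating point can be chosen on the nonnegative side of any given functional.\<close>
lemma norming_point:
  fixes A :: "'a::real_normed_vector \<Rightarrow>\<^sub>L 'b::real_normed_vector" and u :: "'a \<Rightarrow>\<^sub>L real"
  assumes "\<gamma> > 0"
  obtains x where "norm x \<le> 1" "0 \<le> blinfun_apply u x" "norm A - \<gamma> < norm (blinfun_apply A x)"
proof -
  have "\<exists>x. norm x \<le> 1 \<and> norm A - \<gamma> < norm (blinfun_apply A x)"
  proof (rule ccontr)
    assume "\<not> ?thesis"
    then have small: "\<And>x. norm x \<le> 1 \<Longrightarrow> norm (blinfun_apply A x) \<le> norm A - \<gamma>"
      by force
    have pos: "0 \<le> norm A - \<gamma>" using small[of 0] by simp
    have "norm (blinfun_apply A x) \<le> (norm A - \<gamma>) * norm x" for x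
    proof (cases "x = 0")
      case False
      have "norm (blinfun_apply A (x /\<^sub>R norm x)) \<le> norm A - \<gamma>" using False by (intro small) simp
      then show ?thesis using False by (simp add: blinfun.scaleR_right field_simps)
    qed simp
    then have "norm A \<le> norm A - \<gamma>" by (rule norm_blinfun_bound[OF pos])
    then show False using assms by simp
  qed
  then obtain x where x: "norm x \<le> 1" "norm A - \<gamma> < norm (blinfun_apply A x)" by blast
  show ?thesis
  proof (cases "0 \<le> blinfun_apply u x")
    case True then show ?thesis using x by (intro that) auto
  next
    case False then show ?thesis using x
      by (intro that[of "- x"]) (auto simp: blinfun.minus_right)
  qed
qed

text \<open>The rank-one operator x \<mapsto> f x y has norm |f| |y|; the lower bound composes it with
  a functional norming y.\<close>
lemma norm_rank_one: "norm (rank_one f y) = norm f * norm y"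
proof (rule antisym)
  have "\<bar>blinfun_apply f x\<bar> * norm y \<le> (norm f * norm x) * norm y" for x
    using mult_right_mono[OF norm_blinfun[of f x]] by simp
  then show "norm (rank_one f y) \<le> norm f * norm y"
    by (intro norm_blinfun_bound) (simp_all add: rank_one_apply algebra_simps)
next
  obtain g where g: "norm g \<le> 1" "blinfun_apply g y = norm y" using norming_functional by blast
  have "g o\<^sub>L rank_one f y = norm y *\<^sub>R f"
    by (rule blinfun_eqI) (simp add: rank_one_apply blinfun.scaleR_right blinfun.scaleR_left g(2))
  then have "norm f * norm y = norm (g o\<^sub>L rank_one f y)" by simp
  also have "\<dots> \<le> norm g * norm (rank_one f y)" by (rule norm_blinfun_compose)
  also have "\<dots> \<le> norm (rank_one f y)" using g(1) by (simp add: mult_left_le_one_le)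
  finally show "norm f * norm y \<le> norm (rank_one f y)" .
qed

text \<open>u \<otimes> y is linear in y, so u \<otimes> E is the span of u \<otimes> B when E = span B.\<close>
lemma linear_rank_one: "linear (rank_one u :: 'b::real_normed_vector \<Rightarrow> ('a::real_normed_vector \<Rightarrow>\<^sub>L 'b))"
  by (rule linearI) (auto intro!: blinfun_eqI simp: rank_one_apply plus_blinfun.rep_eq
      scaleR_blinfun.rep_eq scaleR_add_right)

section \<open>Small roughness gives thin slices\<close>

text \<open>If the roughness of the dual norm at u is below \<eta>, then every operator of norm at most one
  varies by at most 2\<eta> on a slice {x \<in> B_X. u x \<ge> 1 - \<delta>}: a functional \<phi> = g \<circ> T norming
  T x1 - T x2 gives the test direction h = t \<phi> in the definition of roughness.\<close>
lemma small_roughness_thin_slice: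
  fixes u :: "'a::real_normed_vector \<Rightarrow>\<^sub>L real"
  assumes r: "roughness u < ereal \<eta>" and \<eta>: "\<eta> > 0"
  obtains \<delta> where "\<delta> > 0" and "\<And>(T::'a \<Rightarrow>\<^sub>L 'b::real_normed_vector) x1 x2. norm T \<le> 1 \<Longrightarrow>
     norm x1 \<le> 1 \<Longrightarrow> norm x2 \<le> 1 \<Longrightarrow> 1 - \<delta> \<le> blinfun_apply u x1 \<Longrightarrow> 1 - \<delta> \<le> blinfun_apply u x2 \<Longrightarrow>
     norm (blinfun_apply T x1 - blinfun_apply T x2) \<le> 2 * \<eta>"
proof -
  have "eventually (\<lambda>h. ereal ((norm (u + h) + norm (u - h) - 2) / norm h) < ereal \<eta>) (at 0)"
    using Limsup_lessD[OF r[unfolded roughness_def]] .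
  then obtain d where d: "d > 0"
    and dh: "\<And>h. h \<noteq> 0 \<Longrightarrow> dist h 0 < d \<Longrightarrow> (norm (u + h) + norm (u - h) - 2) / norm h < \<eta>"
    unfolding eventually_at by auto
  define t where "t = d / 2"
  have t: "t > 0" using d by (simp add: t_def)
  have th: "norm (u + h) + norm (u - h) - 2 < \<eta> * norm h" if "h \<noteq> 0" "norm h \<le> t" for h
    using dh[OF that(1)] that d by (simp add: t_def divide_less_eq)
  show ?thesis
  proof (rule that[of "\<eta> * t / 2"])
    show "\<eta> * t / 2 > 0" using \<eta> t by simp
  next
    fix T :: "'a \<Rightarrow>\<^sub>L 'b" and x1 x2
    assume nT: "norm T \<le> 1" and n1: "norm x1 \<le> 1" and n2: "norm x2 \<le> 1"
      and u1: "1 - \<eta> * t / 2 \<le> blinfun_apply u x1" and u2: "1 - \<eta> * t / 2 \<le> blinfun_apply u x2"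
    define D where "D = norm (blinfun_apply T x1 - blinfun_apply T x2)"
    obtain g :: "'b \<Rightarrow>\<^sub>L real" where g: "norm g \<le> 1"
      "blinfun_apply g (blinfun_apply T x1 - blinfun_apply T x2) = D"
      using norming_functional unfolding D_def by blast
    define h where "h = t *\<^sub>R (g o\<^sub>L T)"
    have "norm (g o\<^sub>L T) \<le> 1"
      using norm_blinfun_compose[of g T] mult_le_one[OF g(1) _ nT] by simp
    then have nh: "norm h \<le> t" using t by (simp add: h_def mult_left_le)
    have hD: "blinfun_apply h x1 - blinfun_apply h x2 = t * D"
      using g(2) by (simp add: h_def scaleR_blinfun.rep_eq blinfun.diff_right flip: right_diff_distrib)
    show "D \<le> 2 * \<eta>"
    proof (cases "h = 0")
      case True then show ?thesis using hD t \<eta> by simp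
    next
      case False
      have "norm (u + h) + norm (u - h) - 2 < \<eta> * t"
        using th[OF False nh] mult_left_mono[OF nh, of \<eta>] \<eta> by linarith
      moreover have "blinfun_apply (u + h) x1 \<le> norm (u + h)" "blinfun_apply (u - h) x2 \<le> norm (u - h)"
        using n1 n2 by (auto intro: blinfun_apply_le_norm)
      ultimately have "t * D < t * (2 * \<eta>)"
        using hD u1 u2 by (simp add: plus_blinfun.rep_eq minus_blinfun.rep_eq algebra_simps)
      then show ?thesis using t by simp
    qed
  qed
qed

section \<open>The central estimate\<close>

lemma coefficient_defect:
  fixes e z :: "'b::real_normed_vector"
  assumes "norm z \<le> 1" "0 \<le> a" "(1 - \<beta>) * (norm e + \<bar>c\<bar>) \<le> norm (a *\<^sub>R e + c *\<^sub>R z)"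
  shows "(1 - a) * norm e \<le> \<beta> * (norm e + \<bar>c\<bar>)"
proof -
  have "norm (a *\<^sub>R e + c *\<^sub>R z) \<le> a * norm e + \<bar>c\<bar>"
    using norm_triangle_ineq[of "a *\<^sub>R e" "c *\<^sub>R z"] mult_left_le[OF assms(1), of "\<bar>c\<bar>"] assms(2)
    by simp
  then show ?thesis using assms(3) by (simp add: algebra_simps)
qed

lemma transfer_lower_bound:
  fixes e z y0 :: "'b::real_normed_vector"
  assumes "a \<le> 1" "norm (z - y0) \<le> d" "L \<le> norm (a *\<^sub>R e + c *\<^sub>R z)"
  shows "L - (1 - a) * norm e - \<bar>c\<bar> * d \<le> norm (e + c *\<^sub>R y0)"
proof -
  have "a *\<^sub>R e + c *\<^sub>R z = (e + c *\<^sub>R y0) - ((1 - a) *\<^sub>R e - c *\<^sub>R (z - y0))"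
    by (simp add: algebra_simps)
  then have "norm (a *\<^sub>R e + c *\<^sub>R z) \<le> norm (e + c *\<^sub>R y0) + norm ((1 - a) *\<^sub>R e - c *\<^sub>R (z - y0))"
    using norm_triangle_ineq4 by metis
  also have "\<dots> \<le> norm (e + c *\<^sub>R y0) + (norm ((1 - a) *\<^sub>R e) + norm (c *\<^sub>R (z - y0)))"
    using norm_triangle_ineq4 by (rule add_left_mono)
  finally have "norm (a *\<^sub>R e + c *\<^sub>R z) \<le> norm (e + c *\<^sub>R y0) + (norm ((1 - a) *\<^sub>R e) + norm (c *\<^sub>R (z - y0)))" .
  moreover have "norm (c *\<^sub>R (z - y0)) \<le> \<bar>c\<bar> * d" using assms(2) by (simp add: mult_left_mono)
  ultimately show ?thesis using assms(1,3) by simp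
qed

lemma pair_norming_point:
  fixes u :: "'a::real_normed_vector \<Rightarrow>\<^sub>L real" and T :: "'a \<Rightarrow>\<^sub>L 'b::real_normed_vector"
  assumes u: "norm u = 1" and T: "norm T \<le> 1" and \<beta>: "0 < \<beta>"
    and pair: "(1 - \<beta>/2) * (norm e + \<bar>c\<bar>) \<le> norm (rank_one u e + c *\<^sub>R T)"
  obtains x where "norm x \<le> 1" "blinfun_apply u x \<le> 1"
    "(1 - blinfun_apply u x) * norm e \<le> \<beta> * (norm e + \<bar>c\<bar>)"
    "(1 - \<beta>) * (norm e + \<bar>c\<bar>) \<le> norm (blinfun_apply u x *\<^sub>R e + c *\<^sub>R blinfun_apply T x)"
proof (cases "norm e + \<bar>c\<bar> = 0")
  case True then show ?thesis by (intro that[of 0]) (auto simp: add_nonneg_eq_0_iff)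
next
  case False
  then have "0 < norm e + \<bar>c\<bar>" by (simp add: add_pos_nonneg add_nonneg_pos less_le)
  then have N: "0 < \<beta>/2 * (norm e + \<bar>c\<bar>)" using \<beta> by simp
  obtain x where x: "norm x \<le> 1" "0 \<le> blinfun_apply u x"
    "norm (rank_one u e + c *\<^sub>R T) - \<beta>/2 * (norm e + \<bar>c\<bar>) < norm (blinfun_apply (rank_one u e + c *\<^sub>R T) x)"
    using norming_point[OF N] by blast
  have app: "blinfun_apply (rank_one u e + c *\<^sub>R T) x = blinfun_apply u x *\<^sub>R e + c *\<^sub>R blinfun_apply T x"
    by (simp add: rank_one_apply plus_blinfun.rep_eq scaleR_blinfun.rep_eq)
  have split: "(1 - \<beta>) * (norm e + \<bar>c\<bar>) = (1 - \<beta>/2) * (norm e + \<bar>c\<bar>) - \<beta>/2 * (norm e + \<bar>c\<bar>)"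
    by (simp add: algebra_simps)
  have big: "(1 - \<beta>) * (norm e + \<bar>c\<bar>) \<le> norm (blinfun_apply u x *\<^sub>R e + c *\<^sub>R blinfun_apply T x)"
    using x(3)[unfolded app] pair split by linarith
  have "norm (blinfun_apply T x) \<le> 1" using norm_blinfun[of T x] mult_le_one[OF T _ x(1)] by simp
  then show ?thesis
    using x(1) big u blinfun_apply_le_norm[OF x(1), of u] coefficient_defect[OF _ x(2) big]
    by (intro that) auto
qed

text \<open>Testing the pair estimate on a unit vector w forces the norming point into the slice,
  so T x0 has norm close to one.\<close>
lemma slice_value_norm:
  fixes u :: "'a::real_normed_vector \<Rightarrow>\<^sub>L real" and T :: "'a \<Rightarrow>\<^sub>L 'b::real_normed_vector"
  assumes u: "norm u = 1" and T: "norm T \<le> 1"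
    and slice: "\<And>x. norm x \<le> 1 \<Longrightarrow> 1 - \<delta> \<le> blinfun_apply u x \<Longrightarrow>
                      norm (blinfun_apply T x - blinfun_apply T x0) \<le> \<eta>"
    and pair: "(1 - \<beta>/2) * (norm w + \<bar>1\<bar>) \<le> norm (rank_one u w + 1 *\<^sub>R T)"
    and w: "norm w = 1" and \<beta>: "0 < \<beta>" "2 * \<beta> \<le> \<delta>"
  shows "1 - 4 * \<beta> - \<eta> \<le> norm (blinfun_apply T x0)"
proof -
  obtain x where x: "norm x \<le> 1" "blinfun_apply u x \<le> 1"
    "(1 - blinfun_apply u x) * norm w \<le> \<beta> * (norm w + \<bar>1\<bar>)"
    "(1 - \<beta>) * (norm w + \<bar>1\<bar>) \<le> norm (blinfun_apply u x *\<^sub>R w + 1 *\<^sub>R blinfun_apply T x)"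
    using pair_norming_point[OF u T \<beta>(1) pair] by blast
  have "(1 - \<beta>) * 2 - (1 - blinfun_apply u x) * 1 - 1 * \<eta> \<le> norm (w + 1 *\<^sub>R blinfun_apply T x0)"
    using transfer_lower_bound[OF x(2) _ x(4)] slice[OF x(1)] x(3) w \<beta> by simp
  moreover have "norm (w + blinfun_apply T x0) \<le> 1 + norm (blinfun_apply T x0)"
    using norm_triangle_ineq[of w "blinfun_apply T x0"] w by simp
  ultimately show ?thesis using x(3) w by simp
qed

text \<open>Then T x0 is almost l1-orthogonal to E: either the
  point norming u e + c T lies in the slice, or e is small compared with |e| + |c|.\<close>
lemma slice_point_almost_orthogonal:
  fixes u :: "'a::real_normed_vector \<Rightarrow>\<^sub>L real" and T :: "'a \<Rightarrow>\<^sub>L 'b::real_normed_vector"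
  assumes u: "norm u = 1" and T: "norm T \<le> 1"
    and slice: "\<And>x. norm x \<le> 1 \<Longrightarrow> 1 - \<delta> \<le> blinfun_apply u x \<Longrightarrow>
                      norm (blinfun_apply T x - blinfun_apply T x0) \<le> \<eta>"
    and pair: "\<And>e c. e \<in> E \<Longrightarrow> (1 - \<beta>/2) * (norm e + \<bar>c\<bar>) \<le> norm (rank_one u e + c *\<^sub>R T)"
    and w: "w \<in> E" "norm w = 1"
    and \<beta>: "0 < \<beta>" "2 * \<beta> \<le> \<delta>" and \<eta>: "0 \<le> \<eta>"
    and e: "e \<in> E"
  shows "(1 - (4 * \<beta> + \<eta> + 2 * \<beta> / \<delta>)) * (norm e + \<bar>c\<bar>) \<le> norm (e + c *\<^sub>R blinfun_apply T x0)"
proof -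
  define y0 where "y0 = blinfun_apply T x0"
  define N where "N = norm e + \<bar>c\<bar>"
  have N: "0 \<le> N" by (simp add: N_def)
  have y0: "1 - 4 * \<beta> - \<eta> \<le> norm y0"
    unfolding y0_def using slice_value_norm[OF u T slice pair[OF w(1)] w(2) \<beta>] .
  obtain x where x: "norm x \<le> 1" "blinfun_apply u x \<le> 1" "(1 - blinfun_apply u x) * norm e \<le> \<beta> * N"
    "(1 - \<beta>) * N \<le> norm (blinfun_apply u x *\<^sub>R e + c *\<^sub>R blinfun_apply T x)"
    using pair_norming_point[OF u T \<beta>(1) pair[OF e]] unfolding N_def by blast
  have "(1 - (4 * \<beta> + \<eta> + 2 * \<beta> / \<delta>)) * N \<le> norm (e + c *\<^sub>R y0)"
  proof (cases "1 - \<delta> \<le> blinfun_apply u x")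
    case True
    have "(1 - \<beta>) * N - \<beta> * N - \<bar>c\<bar> * \<eta> \<le> norm (e + c *\<^sub>R y0)"
      using transfer_lower_bound[OF x(2) slice[OF x(1) True] x(4)] x(3) by (simp add: y0_def)
    moreover have "\<bar>c\<bar> * \<eta> \<le> N * \<eta>" using \<eta> by (simp add: N_def mult_right_mono)
    ultimately have "(1 - 2 * \<beta> - \<eta>) * N \<le> norm (e + c *\<^sub>R y0)" by (simp add: algebra_simps)
    moreover have "(1 - (4 * \<beta> + \<eta> + 2 * \<beta> / \<delta>)) * N \<le> (1 - 2 * \<beta> - \<eta>) * N"
    proof (intro mult_right_mono N)
      have "0 \<le> 2 * \<beta> / \<delta>" using \<beta> by simp
      then show "1 - (4 * \<beta> + \<eta> + 2 * \<beta> / \<delta>) \<le> 1 - 2 * \<beta> - \<eta>" using \<beta> by linarith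
    qed
    ultimately show ?thesis by linarith
  next
    case False
    have "\<delta> * norm e \<le> (1 - blinfun_apply u x) * norm e"
      using False by (intro mult_right_mono) auto
    then have small_e: "norm e \<le> \<beta> / \<delta> * N"
      using x(3) \<beta> by (simp add: field_simps)
    have "\<bar>c\<bar> * (1 - 4 * \<beta> - \<eta>) \<le> \<bar>c\<bar> * norm y0"
      using y0 by (simp add: mult_left_mono)
    moreover have "\<bar>c\<bar> * norm y0 - norm e \<le> norm (e + c *\<^sub>R y0)"
      using norm_triangle_ineq3[of "c *\<^sub>R y0" "- e"] by (simp add: add.commute)
    moreover have "(1 - 4 * \<beta> - \<eta>) * N - 2 * norm e \<le> \<bar>c\<bar> * (1 - 4 * \<beta> - \<eta>) - norm e"
      using \<beta> \<eta> by (simp add: N_def algebra_simps)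
    moreover have "(1 - (4 * \<beta> + \<eta> + 2 * \<beta> / \<delta>)) * N = (1 - 4 * \<beta> - \<eta>) * N - 2 * (\<beta> / \<delta> * N)"
      by (simp add: algebra_simps)
    ultimately show ?thesis using small_e by linarith
  qed
  then show ?thesis by (simp add: y0_def N_def)
qed

text \<open>Every octahedral subspace contains a unit vector (apply the definition to E = {0}).\<close>
lemma octahedral_on_unit_vector:
  assumes "octahedral_on S"
  obtains y where "y \<in> S" "norm y = 1"
proof -
  have "\<exists>B. finite B \<and> B \<subseteq> S \<and> span {} = span B" by (intro exI[of _ "{}"]) simp
  from assms[unfolded octahedral_on_def, rule_format, OF conjI[OF this zero_less_one]]
  show ?thesis using that by blast
qed

lemma non_rough_thin_slice:
  assumes non_rough: "\<not> rough TYPE('a \<Rightarrow>\<^sub>L real)" and \<eta>: "0 < \<eta>"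
  obtains u :: "'a::real_normed_vector \<Rightarrow>\<^sub>L real" and \<delta> x0
  where "norm u = 1" "0 < \<delta>" "\<delta> \<le> 1" "norm x0 \<le> 1" "1 - \<delta> \<le> blinfun_apply u x0"
    and "\<And>(T::'a \<Rightarrow>\<^sub>L 'b::real_normed_vector) x. norm T \<le> 1 \<Longrightarrow> norm x \<le> 1 \<Longrightarrow>
           1 - \<delta> \<le> blinfun_apply u x \<Longrightarrow> norm (blinfun_apply T x - blinfun_apply T x0) \<le> \<eta>"
proof -
  have "\<not> eps_rough TYPE('a \<Rightarrow>\<^sub>L real) (\<eta> / 2)" using non_rough \<eta> unfolding rough_def by auto
  then obtain u :: "'a \<Rightarrow>\<^sub>L real" where u: "norm u = 1" "roughness u < ereal (\<eta> / 2)"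
    unfolding eps_rough_def by (auto simp: not_le)
  obtain \<delta>0 where \<delta>0: "\<delta>0 > 0" and thin: "\<And>(T::'a \<Rightarrow>\<^sub>L 'b) x1 x2. norm T \<le> 1 \<Longrightarrow>
     norm x1 \<le> 1 \<Longrightarrow> norm x2 \<le> 1 \<Longrightarrow> 1 - \<delta>0 \<le> blinfun_apply u x1 \<Longrightarrow> 1 - \<delta>0 \<le> blinfun_apply u x2 \<Longrightarrow>
     norm (blinfun_apply T x1 - blinfun_apply T x2) \<le> 2 * (\<eta> / 2)"
    using small_roughness_thin_slice[OF u(2) half_gt_zero[OF \<eta>]] by blast
  define \<delta> where "\<delta> = min \<delta>0 1"
  have \<delta>: "0 < \<delta>" "\<delta> \<le> 1" "\<delta> \<le> \<delta>0" using \<delta>0 by (auto simp: \<delta>_def)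
  obtain x0 where x0: "norm x0 \<le> 1" "0 \<le> blinfun_apply u x0" "norm u - \<delta> < norm (blinfun_apply u x0)"
    using norming_point[OF \<delta>(1), of u u] by blast
  have x0_slice: "1 - \<delta> \<le> blinfun_apply u x0" using x0(2,3) u(1) by simp
  show ?thesis
  proof (rule that[OF u(1) \<delta>(1,2) x0(1) x0_slice])
    fix T :: "'a \<Rightarrow>\<^sub>L 'b" and x assume "norm T \<le> 1" "norm x \<le> 1" "1 - \<delta> \<le> blinfun_apply u x"
    then show "norm (blinfun_apply T x - blinfun_apply T x0) \<le> \<eta>"
      using thin[of T x x0] x0(1) x0_slice \<delta>(3) by simp
  qed
qed

text \<open>The main construction: for a finite-dimensional E = span B containing a unit vector,
  octahedrality of H at u \<otimes> E supplies T, and T x0 for x0 in a thin slice of u is almost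
  l1-orthogonal to E.\<close>
lemma almost_orthogonal_vector:
  fixes H :: "('a::real_normed_vector \<Rightarrow>\<^sub>L 'b::real_normed_vector) set" and B :: "'b set"
  assumes tensor: "tensor_dual \<subseteq> H" and oct: "octahedral_on H"
    and non_rough: "\<not> rough TYPE('a \<Rightarrow>\<^sub>L real)"
    and B: "finite B" and w: "w \<in> span B" "norm w = 1"
    and \<epsilon>: "0 < \<epsilon>" "\<epsilon> \<le> 1"
  obtains y0 where "norm y0 \<le> 1"
    and "\<And>e c. e \<in> span B \<Longrightarrow> (1 - \<epsilon>) * (norm e + \<bar>c\<bar>) \<le> norm (e + c *\<^sub>R y0)"
proof -
  obtain u :: "'a \<Rightarrow>\<^sub>L real" and \<delta> x0 where u: "norm u = 1" and \<delta>: "0 < \<delta>" "\<delta> \<le> 1"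
    and x0: "norm x0 \<le> 1" "1 - \<delta> \<le> blinfun_apply u x0"
    and slice: "\<And>(T::'a \<Rightarrow>\<^sub>L 'b) x. norm T \<le> 1 \<Longrightarrow> norm x \<le> 1 \<Longrightarrow>
           1 - \<delta> \<le> blinfun_apply u x \<Longrightarrow> norm (blinfun_apply T x - blinfun_apply T x0) \<le> \<epsilon> / 3"
    using non_rough_thin_slice[OF non_rough, of "\<epsilon> / 3"] \<epsilon>(1) by auto
  define \<beta> where "\<beta> = \<delta> * \<epsilon> / 12"
  have "\<delta> * \<epsilon> \<le> \<delta>" "\<delta> * \<epsilon> \<le> \<epsilon>"
    using \<delta> \<epsilon> by (simp_all add: mult_left_le mult_left_le_one_le)
  then have \<beta>: "0 < \<beta>" "2 * \<beta> \<le> \<delta>" "4 * \<beta> \<le> \<epsilon> / 3" "2 * \<beta> / \<delta> = \<epsilon> / 6"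
    using \<delta>(1) \<epsilon>(1) by (simp_all add: \<beta>_def)
  have F: "\<exists>B'. finite B' \<and> B' \<subseteq> H \<and> rank_one u ` span B = span B'"
  proof (intro exI conjI)
    show "rank_one u ` span B = span (rank_one u ` B)"
      by (rule span_linear_image[OF linear_rank_one, symmetric])
    show "rank_one u ` B \<subseteq> H"
      using tensor unfolding tensor_dual_def by (auto intro: span_base)
  qed (use B in simp)
  obtain T where T: "norm T = 1" and T_oct: "\<forall>S \<in> rank_one u ` span B. \<forall>c.
                  (1 - \<beta>/2) * (norm S + \<bar>c\<bar>) \<le> norm (S + c *\<^sub>R T)"
    using oct[unfolded octahedral_on_def, rule_format, OF conjI[OF F half_gt_zero[OF \<beta>(1)]]] by blast
  have pair: "(1 - \<beta>/2) * (norm e + \<bar>c\<bar>) \<le> norm (rank_one u e + c *\<^sub>R T)" if "e \<in> span B" for e c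
    using T_oct that by (simp add: norm_rank_one u)
  have estimate: "(1 - (4 * \<beta> + \<epsilon> / 3 + 2 * \<beta> / \<delta>)) * (norm e + \<bar>c\<bar>)
      \<le> norm (e + c *\<^sub>R blinfun_apply T x0)" if "e \<in> span B" for e c
    using slice_point_almost_orthogonal[OF u _ slice pair w \<beta>(1,2) _ that] T \<epsilon> by simp
  show ?thesis
  proof (rule that)
    show "norm (blinfun_apply T x0) \<le> 1"
      using norm_blinfun[of T x0] x0(1) T by simp
  next
    fix e c assume "e \<in> span B"
    moreover have "(1 - \<epsilon>) * (norm e + \<bar>c\<bar>) \<le> (1 - (4 * \<beta> + \<epsilon> / 3 + 2 * \<beta> / \<delta>)) * (norm e + \<bar>c\<bar>)"
      using \<beta> by (intro mult_right_mono) auto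
    ultimately show "(1 - \<epsilon>) * (norm e + \<bar>c\<bar>) \<le> norm (e + c *\<^sub>R blinfun_apply T x0)"
      using estimate by (meson order_trans)
  qed
qed

lemma unit_vector_from_almost_orthogonal:
  fixes y0 :: "'b::real_normed_vector"
  assumes "0 \<in> E'" "E \<subseteq> E'" "norm y0 \<le> 1" "\<epsilon>' \<le> \<epsilon>" "\<epsilon>' < 1"
    and est: "\<And>e c. e \<in> E' \<Longrightarrow> (1 - \<epsilon>') * (norm e + \<bar>c\<bar>) \<le> norm (e + c *\<^sub>R y0)"
  shows "\<exists>y. norm y = 1 \<and> (\<forall>e\<in>E. \<forall>c. (1 - \<epsilon>) * (norm e + \<bar>c\<bar>) \<le> norm (e + c *\<^sub>R y))"
proof (intro exI conjI ballI allI)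
  have "1 - \<epsilon>' \<le> norm y0" using est[OF assms(1), of 1] by simp
  then have y0: "0 < norm y0" using assms(5) by linarith
  then show "norm (sgn y0) = 1" by (simp add: norm_sgn)
  fix e c assume "e \<in> E"
  have "\<bar>c\<bar> \<le> \<bar>c / norm y0\<bar>"
    using y0 assms(3) by (simp add: abs_div le_divide_eq mult_left_le)
  then have "(1 - \<epsilon>) * (norm e + \<bar>c\<bar>) \<le> (1 - \<epsilon>') * (norm e + \<bar>c / norm y0\<bar>)"
    using assms(4,5) by (intro mult_mono) auto
  also have "\<dots> \<le> norm (e + (c / norm y0) *\<^sub>R y0)" using est \<open>e \<in> E\<close> assms(2) by blast
  also have "(c / norm y0) *\<^sub>R y0 = c *\<^sub>R sgn y0" by (simp add: sgn_div_norm divide_inverse)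
  finally show "(1 - \<epsilon>) * (norm e + \<bar>c\<bar>) \<le> norm (e + c *\<^sub>R sgn y0)" .
qed

text \<open>An octahedral space of operators into Y is nonzero, hence Y contains a unit vector.\<close>
lemma octahedral_operators_unit_vector:
  fixes H :: "('a::real_normed_vector \<Rightarrow>\<^sub>L 'b::real_normed_vector) set"
  assumes "octahedral_on H"
  obtains w :: 'b where "norm w = 1"
proof -
  obtain T where "T \<in> H" "norm T = 1" using octahedral_on_unit_vector[OF assms] .
  then have "T \<noteq> 0" by auto
  then obtain x where "blinfun_apply T x \<noteq> 0" using blinfun_eqI[of T 0] by auto
  then show ?thesis using that[of "sgn (blinfun_apply T x)"] by (simp add: norm_sgn)
qed

theorem mainTheorem12:
  fixes H :: "('a::banach \<Rightarrow>\<^sub>L 'b::banach) set"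
  assumes "subspace H" and "closed H"
    and "tensor_dual \<subseteq> H"
    and "octahedral_on H"
    and "\<not> rough TYPE('a \<Rightarrow>\<^sub>L real)"
  shows "octahedral TYPE('b)"
proof -
  obtain w :: 'b where w: "norm w = 1" using octahedral_operators_unit_vector[OF assms(4)] .
  show ?thesis
    unfolding octahedral_on_def
  proof (intro allI impI, elim conjE exE)
    fix E :: "'b set" and \<epsilon> :: real and B
    assume "\<epsilon> > 0" "finite B" "E = span B"
    define \<epsilon>' where "\<epsilon>' = min \<epsilon> (1/2)"
    have \<epsilon>': "0 < \<epsilon>'" "\<epsilon>' \<le> 1" "\<epsilon>' \<le> \<epsilon>" "\<epsilon>' < 1" using \<open>\<epsilon> > 0\<close> by (auto simp: \<epsilon>'_def)
    have "finite (insert w B)" "w \<in> span (insert w B)" using \<open>finite B\<close> by (simp_all add: span_base)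
    then obtain y0 where "norm y0 \<le> 1" and "\<And>e c. e \<in> span (insert w B) \<Longrightarrow>
        (1 - \<epsilon>') * (norm e + \<bar>c\<bar>) \<le> norm (e + c *\<^sub>R y0)"
      using almost_orthogonal_vector[OF assms(3-5) _ _ w \<epsilon>'(1,2)] by blast
    moreover have "E \<subseteq> span (insert w B)" using \<open>E = span B\<close> by (simp add: span_mono subset_insertI)
    ultimately show "\<exists>y\<in>UNIV. norm y = 1 \<and> (\<forall>x\<in>E. \<forall>c. (1 - \<epsilon>) * (norm x + \<bar>c\<bar>) \<le> norm (x + c *\<^sub>R y))"
      using unit_vector_from_almost_orthogonal[OF span_zero _ _ \<epsilon>'(3,4)] by blast
  qed
qed

end
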